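(* Let $R=\mathbb{Z}_4+u\mathbb{Z}_4$ with $u^2=0$, and let $C=\langle a(x)+ub(x)\rangle$ be the $(1+2u)$-constacyclic code of length $n$ over $R$ given by the ideal of $R[x]/\langle x^n-(1+2u)\rangle$ generated by $a(x)+ub(x)$, where $a(x),b(x)\in\mathbb{Z}_4[x]$ have degree $<n$. Let $\phi:R^n\to\mathbb{Z}_4^{2n}$ be the Gray map $\phi(c_0,\dots,c_{n-1})=(b_0,\dots,b_{n-1},2a_0+b_0,\dots,2a_{n-1}+b_{n-1})$ with $c_i=a_i+ub_i$. Then $\phi(C)$ is a cyclic code over $\mathbb{Z}_4$ of length $2n$, namely the ideal of $\mathbb{Z}_4[x]/\langle x^{2n}-1\rangle$ generated by the polynomials $b(x)+x^n(2a(x)+b(x))$ and $a(x)+x^na(x)$.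
   Context: Vectors $(c_0,\dots,c_{m-1})$ are identified with polynomials $\sum_i c_ix^i$; thus codes of length $n$ over $R$ are subsets of $R[x]/\langle x^n-(1+2u)\rangle$ and codes of length $2n$ over $\mathbb{Z}_4$ are subsets of $\mathbb{Z}_4[x]/\langle x^{2n}-1\rangle$, where cyclic codes are exactly ideals. *)

theory Defs
  imports "HOL-Library.Numeral_Type" "HOL-Computational_Algebra.Polynomial"
begin

text \<open>The ring Z4 is the numeral type 4.  The ring R = Z4 + u Z4 with u^2 = 0:
  an element Rel a b stands for a + u b.\<close>

datatype R = Rel (re: "4") (nu: "4")

instantiation R :: comm_ring_1
begin
definition "zero_R = Rel 0 0"
definition "one_R = Rel 1 0"
definition "plus_R x y = Rel (re x + re y) (nu x + nu y)"
definition "minus_R x y = Rel (re x - re y) (nu x - nu y)"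
definition "uminus_R x = Rel (- re x) (- nu x)"
definition "times_R x y = Rel (re x * re y) (re x * nu y + nu x * re y)"
instance
  by standard (auto simp: zero_R_def one_R_def plus_R_def minus_R_def uminus_R_def
                 times_R_def algebra_simps intro: R.expand)
end

definition u :: R where "u = Rel 0 1"
definition emb :: "4 \<Rightarrow> R" where "emb c = Rel c 0"

definition plus_u :: "4 poly \<Rightarrow> 4 poly \<Rightarrow> R poly" where
  "plus_u a b = map_poly emb a + smult u (map_poly emb b)"

text \<open>A code of length n given by polynomials of degree < n (vector (c_0..c_{n-1})
  identified with sum c_i x^i).\<close>
definition deg_lt :: "nat \<Rightarrow> 'a::zero poly \<Rightarrow> bool" where
  "deg_lt n p \<longleftrightarrow> (\<forall>i\<ge>n. coeff p i = 0)"

text \<open>The (1+2u)-constacyclic code of length n generated by g: the ideal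
  generated by g in R[x]/(x^n - (1+2u)), via its canonical representatives of degree < n.\<close>
definition constacyclic_code :: "nat \<Rightarrow> R poly \<Rightarrow> R poly set" where
  "constacyclic_code n g = {c. deg_lt n c \<and>
      (\<exists>r s. c = r * g + s * (monom 1 n - [:1 + 2 * u:]))}"

text \<open>The cyclic code of length m over Z4 generated by g1 and g2: the ideal
  generated by g1, g2 in Z4[x]/(x^m - 1), via representatives of degree < m.\<close>
definition cyclic_code2 :: "nat \<Rightarrow> 4 poly \<Rightarrow> 4 poly \<Rightarrow> 4 poly set" where
  "cyclic_code2 m g1 g2 = {v. deg_lt m v \<and>
      (\<exists>r1 r2 s. v = r1 * g1 + r2 * g2 + s * (monom 1 m - 1))}"

text \<open>Gray map on length-n words: c_i = a_i + u b_i is sent to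
  (b_0..b_{n-1}, 2a_0+b_0, .., 2a_{n-1}+b_{n-1}), i.e. as polynomials
  b(x) + x^n (2a(x) + b(x)).\<close>
definition gray :: "nat \<Rightarrow> R poly \<Rightarrow> 4 poly" where
  "gray n c = map_poly nu c + monom 1 n * (smult 2 (map_poly re c) + map_poly nu c)"

end

theory Submission
  imports Defs
begin

text \<open>Write \<open>\<rho>\<close> and \<open>\<nu>\<close> for the coefficientwise projections \<open>a + u b \<mapsto> a\<close> and
  \<open>a + u b \<mapsto> b\<close> from \<open>R[x]\<close> to \<open>\<int>\<^sub>4[x]\<close>, so that the Gray map is
  \<open>\<phi>(c) = \<nu>(c) + x\<^sup>n (2\<rho>(c) + \<nu>(c))\<close>.  Because \<open>u\<^sup>2 = 0\<close>, \<open>\<rho>\<close> is a ring homomorphism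
  and \<open>\<nu>\<close> satisfies the Leibniz rule \<open>\<nu>(s h) = \<rho>(s) \<nu>(h) + \<nu>(s) \<rho>(h)\<close>, whence
  \<open>\<phi>(s h) = \<rho>(s) \<phi>(h) + \<nu>(s) (1 + x\<^sup>n) \<rho>(h)\<close>.  For \<open>h = a + u b\<close> this is
  \<open>\<rho>(s) g\<^sub>1 + \<nu>(s) g\<^sub>2\<close> with the two claimed generators, and for
  \<open>h = x\<^sup>n - (1 + 2u)\<close> it is \<open>(2\<rho>(s) + \<nu>(s)) (x\<^sup>2\<^sup>n - 1)\<close>.  Since \<open>(\<rho>(s), \<nu>(s))\<close> can be
  any pair, \<open>\<phi>\<close> maps the ideal \<open>\<langle>a + u b, x\<^sup>n - (1 + 2u)\<rangle>\<close> of \<open>R[x]\<close> onto the ideal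
  \<open>\<langle>g\<^sub>1, g\<^sub>2, x\<^sup>2\<^sup>n - 1\<rangle>\<close> of \<open>\<int>\<^sub>4[x]\<close>.  Both moduli are monic, so every residue class has a
  unique representative of degree below \<open>n\<close> resp. \<open>2n\<close>, and \<open>\<phi>\<close> sends the former
  representatives to the latter.\<close>

lemma deg_lt_iff_degree: "deg_lt n p \<longleftrightarrow> p = 0 \<or> degree p < n"
proof
  assume "deg_lt n p"
  then show "p = 0 \<or> degree p < n"
    by (metis deg_lt_def leading_coeff_0_iff not_le)
next
  assume "p = 0 \<or> degree p < n"
  then show "deg_lt n p"
    by (auto simp: deg_lt_def coeff_eq_0)
qed

lemma
  fixes q :: "'a::comm_ring_1 poly"
  assumes "degree q < m"
  shows degree_monom_minus_lower: "degree (monom 1 m - q) = m"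
    and lead_coeff_monom_minus_lower: "lead_coeff (monom 1 m - q) = 1"
proof -
  have lower: "degree (- q) < degree (monom 1 m :: 'a poly)"
    using assms by (simp add: degree_monom_eq)
  show "degree (monom 1 m - q) = m"
    using degree_add_eq_left[OF lower] by (metis degree_monom_eq diff_conv_add_uminus one_neq_zero)
  show "lead_coeff (monom 1 m - q) = 1"
    using lead_coeff_add_le[OF lower] by (metis add.commute diff_conv_add_uminus lead_coeff_monom)
qed

lemma monic_division:
  fixes f p :: "'a::comm_ring_1 poly"
  assumes "lead_coeff p = 1"
  obtains q r where "f = q * p + r" and "deg_lt (degree p) r"
proof -
  obtain q r where qr: "pseudo_divmod f p = (q, r)"
    by fastforce
  have "p \<noteq> 0"
    using assms by auto
  from pseudo_divmod[OF this qr] assms have "f = q * p + r" "deg_lt (degree p) r"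
    by (simp_all add: deg_lt_iff_degree mult.commute)
  then show thesis
    by (rule that)
qed

lemma monic_multiple_deg_lt_eq_0:
  fixes k p :: "'a::comm_ring_1 poly"
  assumes "lead_coeff p = 1" and "deg_lt (degree p) (k * p)"
  shows "k * p = 0"
proof -
  have "lead_coeff k = coeff (k * p) (degree k + degree p)"
    using coeff_mult_degree_sum[of k p] assms(1) by simp
  also have "\<dots> = 0"
    using assms(2) by (simp add: deg_lt_def)
  finally show ?thesis
    by simp
qed

abbreviation re_poly :: "R poly \<Rightarrow> 4 poly" where "re_poly p \<equiv> map_poly re p"
abbreviation nu_poly :: "R poly \<Rightarrow> 4 poly" where "nu_poly p \<equiv> map_poly nu p"

abbreviation constacyclic_modulus :: "nat \<Rightarrow> R poly" where
  "constacyclic_modulus n \<equiv> monom 1 n - [:1 + 2 * u:]"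
abbreviation cyclic_modulus :: "nat \<Rightarrow> 'a::comm_ring_1 poly" where
  "cyclic_modulus m \<equiv> monom 1 m - 1"

lemma re_zero [simp]: "re 0 = 0" and nu_zero [simp]: "nu 0 = 0"
  by (simp_all add: zero_R_def)

lemma re_one [simp]: "re 1 = 1" and nu_one [simp]: "nu 1 = 0"
  by (simp_all add: one_R_def)

lemma re_plus [simp]: "re (x + y) = re x + re y" and nu_plus [simp]: "nu (x + y) = nu x + nu y"
  by (simp_all add: plus_R_def)

lemma re_minus [simp]: "re (x - y) = re x - re y" and nu_minus [simp]: "nu (x - y) = nu x - nu y"
  by (simp_all add: minus_R_def)

lemma re_times [simp]: "re (x * y) = re x * re y"
  and nu_times [simp]: "nu (x * y) = re x * nu y + nu x * re y"
  by (simp_all add: times_R_def)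

lemma re_two [simp]: "re 2 = 2" and nu_two [simp]: "nu 2 = 0"
  by (simp_all only: one_add_one[symmetric] re_plus nu_plus re_one nu_one) simp

lemma re_u [simp]: "re u = 0" and nu_u [simp]: "nu u = 1"
  by (simp_all add: u_def)

lemma re_emb [simp]: "re (emb c) = c" and nu_emb [simp]: "nu (emb c) = 0"
  by (simp_all add: emb_def)

lemma emb_zero [simp]: "emb 0 = 0"
  by (simp add: emb_def zero_R_def)

lemma re_sum: "re (sum f A) = (\<Sum>i\<in>A. re (f i))"
  by (induction A rule: infinite_finite_induct) simp_all

lemma nu_sum: "nu (sum f A) = (\<Sum>i\<in>A. nu (f i))"
  by (induction A rule: infinite_finite_induct) simp_all

lemma re_poly_plus: "re_poly (p + q) = re_poly p + re_poly q"
  by (rule poly_eqI) (simp add: coeff_map_poly)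

lemma nu_poly_plus: "nu_poly (p + q) = nu_poly p + nu_poly q"
  by (rule poly_eqI) (simp add: coeff_map_poly)

lemma re_poly_times: "re_poly (p * q) = re_poly p * re_poly q"
  by (rule poly_eqI) (simp add: coeff_map_poly coeff_mult re_sum)

lemma nu_poly_times: "nu_poly (p * q) = re_poly p * nu_poly q + nu_poly p * re_poly q"
  by (rule poly_eqI) (simp add: coeff_map_poly coeff_mult nu_sum sum.distrib)

lemma re_poly_plus_u [simp]: "re_poly (plus_u a b) = a"
  by (rule poly_eqI) (simp add: plus_u_def coeff_map_poly)

lemma nu_poly_plus_u [simp]: "nu_poly (plus_u a b) = b"
  by (rule poly_eqI) (simp add: plus_u_def coeff_map_poly)

lemma re_poly_constacyclic_modulus: "re_poly (constacyclic_modulus n) = cyclic_modulus n"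
  by (rule poly_eqI) (simp add: coeff_map_poly coeff_monom coeff_pCons split: nat.split)

lemma nu_poly_constacyclic_modulus: "nu_poly (constacyclic_modulus n) = [:-2:]"
  by (rule poly_eqI) (auto simp: coeff_map_poly coeff_monom coeff_pCons split: nat.split)

lemma gray_plus: "gray n (p + q) = gray n p + gray n q"
  by (simp add: gray_def re_poly_plus nu_poly_plus algebra_simps smult_add_right)

lemma gray_times:
  "gray n (s * h) = re_poly s * gray n h + nu_poly s * (re_poly h + monom 1 n * re_poly h)"
  by (simp add: gray_def re_poly_times nu_poly_times algebra_simps)

lemma gray_times_plus_u:
  "gray n (r * plus_u a b)
     = re_poly r * (b + monom 1 n * (smult 2 a + b)) + nu_poly r * (a + monom 1 n * a)"
  unfolding gray_times by (simp add: gray_def)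

lemma gray_times_constacyclic_modulus:
  "gray n (s * constacyclic_modulus n)
     = (smult 2 (re_poly s) + nu_poly s) * cyclic_modulus (2 * n)"
proof -
  have gray_modulus: "gray n (constacyclic_modulus n) = smult 2 (cyclic_modulus (2 * n))"
    by (rule poly_eqI)
      (auto simp: gray_def re_poly_constacyclic_modulus nu_poly_constacyclic_modulus
        coeff_monom_mult coeff_monom coeff_pCons split: nat.split)
  have re_modulus: "re_poly (constacyclic_modulus n) + monom 1 n * re_poly (constacyclic_modulus n)
      = cyclic_modulus (2 * n)"
    unfolding re_poly_constacyclic_modulus by (simp add: algebra_simps mult_monom flip: mult_2)
  show ?thesis
    unfolding gray_times gray_modulus re_modulus
    by (simp add: algebra_simps smult_add_right smult_diff_right)
qed

lemma deg_lt_gray: "deg_lt n c \<Longrightarrow> deg_lt (2 * n) (gray n c)"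
  by (auto simp: deg_lt_def gray_def coeff_monom_mult coeff_map_poly)

lemma gray_constacyclic_combination:
  "gray n (r * plus_u a b + s * constacyclic_modulus n)
     = re_poly r * (b + monom 1 n * (smult 2 a + b)) + nu_poly r * (a + monom 1 n * a)
       + (smult 2 (re_poly s) + nu_poly s) * cyclic_modulus (2 * n)"
  by (simp add: gray_plus gray_times_plus_u gray_times_constacyclic_modulus)

lemma gray_constacyclic_code_subset:
  "gray n ` constacyclic_code n (plus_u a b)
     \<subseteq> cyclic_code2 (2 * n) (b + monom 1 n * (smult 2 a + b)) (a + monom 1 n * a)"
proof
  fix v assume "v \<in> gray n ` constacyclic_code n (plus_u a b)"
  then obtain c r s where "deg_lt n c" and "c = r * plus_u a b + s * constacyclic_modulus n"
    and "v = gray n c"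
    by (auto simp: constacyclic_code_def)
  with deg_lt_gray gray_constacyclic_combination
  show "v \<in> cyclic_code2 (2 * n) (b + monom 1 n * (smult 2 a + b)) (a + monom 1 n * a)"
    unfolding cyclic_code2_def by blast
qed

text \<open>The codeword is \<open>(r\<^sub>1 + u r\<^sub>2) (a + u b)\<close> reduced modulo the monic \<open>x\<^sup>n - (1 + 2u)\<close>.\<close>

lemma constacyclic_codeword_with_gray_image:
  assumes "n > 0"
  obtains c k where "c \<in> constacyclic_code n (plus_u a b)"
    and "gray n c = r1 * (b + monom 1 n * (smult 2 a + b)) + r2 * (a + monom 1 n * a)
                    + k * cyclic_modulus (2 * n)"
proof -
  have "degree [:1 + 2 * u:] < n"
    using assms by simp
  then have "lead_coeff (constacyclic_modulus n) = 1" and "degree (constacyclic_modulus n) = n"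
    by (rule lead_coeff_monom_minus_lower, rule degree_monom_minus_lower)
  then obtain q c where "plus_u r1 r2 * plus_u a b = q * constacyclic_modulus n + c"
    and c_deg: "deg_lt n c"
    by (metis monic_division)
  then have c_eq: "c = plus_u r1 r2 * plus_u a b + (- q) * constacyclic_modulus n"
    by (simp add: algebra_simps)
  with c_deg have "c \<in> constacyclic_code n (plus_u a b)"
    unfolding constacyclic_code_def by blast
  moreover have "gray n c = r1 * (b + monom 1 n * (smult 2 a + b)) + r2 * (a + monom 1 n * a)
      + (smult 2 (re_poly (- q)) + nu_poly (- q)) * cyclic_modulus (2 * n)"
    unfolding c_eq gray_constacyclic_combination by simp
  ultimately show thesis
    by (rule that)
qed

lemma cyclic_code2_subset_gray_constacyclic_code:
  "cyclic_code2 (2 * n) (b + monom 1 n * (smult 2 a + b)) (a + monom 1 n * a)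
     \<subseteq> gray n ` constacyclic_code n (plus_u a b)"
proof
  fix v assume "v \<in> cyclic_code2 (2 * n) (b + monom 1 n * (smult 2 a + b)) (a + monom 1 n * a)"
  then obtain r1 r2 s where v_deg: "deg_lt (2 * n) v"
    and v: "v = r1 * (b + monom 1 n * (smult 2 a + b)) + r2 * (a + monom 1 n * a)
                + s * cyclic_modulus (2 * n)"
    by (auto simp: cyclic_code2_def)
  show "v \<in> gray n ` constacyclic_code n (plus_u a b)"
  proof (cases "n = 0")
    case True
    with v_deg have "v = gray n 0"
      by (simp add: deg_lt_iff_degree gray_def)
    moreover have "0 \<in> constacyclic_code n (plus_u a b)"
      by (auto simp: constacyclic_code_def deg_lt_def intro!: exI[of _ 0])
    ultimately show ?thesis
      by blast
  next
    case False
    then obtain c k where c_code: "c \<in> constacyclic_code n (plus_u a b)"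
      and gray_c: "gray n c = r1 * (b + monom 1 n * (smult 2 a + b)) + r2 * (a + monom 1 n * a)
                             + k * cyclic_modulus (2 * n)"
      by (metis constacyclic_codeword_with_gray_image gr0I)
    have "gray n c - v = (k - s) * cyclic_modulus (2 * n)"
      by (simp add: gray_c v algebra_simps)
    moreover have "deg_lt (2 * n) (gray n c - v)"
      using c_code v_deg deg_lt_gray[of n c] by (simp add: constacyclic_code_def deg_lt_def)
    moreover have "lead_coeff (cyclic_modulus (2 * n) :: 4 poly) = 1"
      and "degree (cyclic_modulus (2 * n) :: 4 poly) = 2 * n"
      using False by (simp_all add: lead_coeff_monom_minus_lower degree_monom_minus_lower)
    ultimately have "gray n c = v"
      using monic_multiple_deg_lt_eq_0[of "cyclic_modulus (2 * n)" "k - s"] by simp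
    with c_code show ?thesis
      by blast
  qed
qed

theorem theorem5p6:
  fixes n :: nat and a b :: "4 poly"
  assumes "deg_lt n a" and "deg_lt n b"
  shows "gray n ` constacyclic_code n (plus_u a b)
       = cyclic_code2 (2 * n) (b + monom 1 n * (smult 2 a + b)) (a + monom 1 n * a)"
  using gray_constacyclic_code_subset cyclic_code2_subset_gray_constacyclic_code
  by (rule subset_antisym)

end
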